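(* Let $S$ be a numerical semigroup with conductor $c$, and let $M=\{m=m_1<\cdots<m_r\}\subseteq S$ with $m\ge 2c-1$. Then $M$ is $(S,m,r)$-amenable if and only if for all $i\in\{1,\ldots,r\}$ and every minimal generator $g$ of $S$, if $m_i-g\ge m$ then $m_i-g\in M$.
   Context: A numerical semigroup is a submonoid of $\mathbb N$ with finite complement; its minimal generators are its irreducible nonzero elements (those not a sum of two nonzero elements of $S$); its conductor $c$ is the least element of $S$ such that $c+n\in S$ for all $n\in\mathbb N$. For $x\in S$, $\mathrm D(x)=\{\alpha\in S\mid x-\alpha\in S\}$. A set $M=\{m_1<\cdots<m_r\}\subseteq S$ with $2c-1\le m=m_1$ is $(S,m,r)$-amenable if $\mathrm D(m_i)\cap[m,\infty)\subseteq M$ for all $i\in\{1,\ldots,r\}$. *)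

theory Defs
  imports Main
begin

definition numerical_semigroup :: "nat set \<Rightarrow> bool" where
  "numerical_semigroup S \<longleftrightarrow> 0 \<in> S \<and> (\<forall>x\<in>S. \<forall>y\<in>S. x + y \<in> S) \<and> finite (UNIV - S)"

definition conductor :: "nat set \<Rightarrow> nat" where
  "conductor S = (LEAST c. c \<in> S \<and> (\<forall>n. c + n \<in> S))"

definition minimal_generators :: "nat set \<Rightarrow> nat set" where
  "minimal_generators S = {g \<in> S. g \<noteq> 0 \<and> \<not> (\<exists>a\<in>S. \<exists>b\<in>S. a \<noteq> 0 \<and> b \<noteq> 0 \<and> g = a + b)}"

text \<open>D(x) = {alpha in S | x - alpha in S}, with integer subtraction (so alpha <= x).\<close>
definition Dset :: "nat set \<Rightarrow> nat \<Rightarrow> nat set" where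
  "Dset S x = {\<alpha> \<in> S. \<alpha> \<le> x \<and> x - \<alpha> \<in> S}"

definition amenable :: "nat set \<Rightarrow> nat \<Rightarrow> nat \<Rightarrow> nat set \<Rightarrow> bool" where
  "amenable S m r M \<longleftrightarrow> finite M \<and> M \<noteq> {} \<and> card M = r \<and> M \<subseteq> S \<and> Min M = m
     \<and> 2 * int (conductor S) - 1 \<le> int m
     \<and> (\<forall>x\<in>M. Dset S x \<inter> {m..} \<subseteq> M)"

end

theory Submission
  imports Defs
begin

text \<open>Every \<open>\<alpha> \<in> D(x)\<close> with \<open>\<alpha> \<ge> m\<close> is reached from \<open>x\<close> by repeatedly subtracting
  minimal generators, since \<open>x - \<alpha> \<in> S\<close> is a sum of minimal generators; every intermediate
  value stays \<open>\<ge> \<alpha> \<ge> m\<close>, so the generator condition keeps it inside \<open>M\<close>. Conversely, for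
  \<open>x \<in> M\<close> and a minimal generator \<open>g\<close> with \<open>x - g \<ge> m \<ge> c\<close>, the difference \<open>x - g\<close> lies in
  \<open>S\<close> and hence in \<open>D(x)\<close>.\<close>

lemma numerical_semigroup_conductor_add:
  assumes "numerical_semigroup S"
  shows "conductor S + n \<in> S"
proof -
  have "finite (UNIV - S)" using assms unfolding numerical_semigroup_def by simp
  then obtain k where bound: "\<forall>n\<in>UNIV - S. n < k"
    unfolding finite_nat_set_iff_bounded by blast
  have "k + n \<in> S" for n
  proof (rule ccontr)
    assume "k + n \<notin> S"
    then have "k + n < k" using bound by blast
    then show False by simp
  qed
  then have "k \<in> S \<and> (\<forall>n. k + n \<in> S)"
    by (metis add_0_right)
  then have "conductor S \<in> S \<and> (\<forall>n. conductor S + n \<in> S)"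
    unfolding conductor_def by (rule LeastI)
  then show ?thesis by blast
qed

lemma numerical_semigroup_mem_if_conductor_le:
  assumes "numerical_semigroup S" "conductor S \<le> y"
  shows "y \<in> S"
  using numerical_semigroup_conductor_add[OF assms(1), of "y - conductor S"] assms(2) by simp

lemma numerical_semigroup_minimal_generator_le:
  assumes "numerical_semigroup S" "b \<in> S" "b \<noteq> 0"
  shows "\<exists>g\<in>minimal_generators S. g \<le> b \<and> b - g \<in> S"
  using assms(2,3)
proof (induction b rule: less_induct)
  case (less b)
  have zero: "0 \<in> S" and add: "\<And>x y. x \<in> S \<Longrightarrow> y \<in> S \<Longrightarrow> x + y \<in> S"
    using assms(1) unfolding numerical_semigroup_def by auto
  show ?case
  proof (cases "b \<in> minimal_generators S")
    case True
    then show ?thesis using zero by auto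
  next
    case False
    then obtain a c where ac: "a \<in> S" "c \<in> S" "a \<noteq> 0" "c \<noteq> 0" "b = a + c"
      using less.prems unfolding minimal_generators_def by auto
    then obtain g where g: "g \<in> minimal_generators S" "g \<le> a" "a - g \<in> S"
      using less.IH[of a] by auto
    have "b - g = (a - g) + c" using ac g by simp
    then have "b - g \<in> S" using g(3) ac(2) add by simp
    moreover have "g \<le> b" using g(2) ac(5) by simp
    ultimately show ?thesis using g(1) by blast
  qed
qed

lemma Dset_closed_imp_diff_closed:
  assumes "numerical_semigroup S" "conductor S \<le> m"
    and closed: "\<forall>x\<in>M. Dset S x \<inter> {m..} \<subseteq> M"
    and "x \<in> M" "g \<in> S" "m + g \<le> x"
  shows "x - g \<in> M"
proof -
  have "x - g \<in> S"
    using numerical_semigroup_mem_if_conductor_le[OF assms(1)] assms(2,6) by simp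
  then have "x - g \<in> Dset S x \<inter> {m..}"
    unfolding Dset_def using assms(5,6) by auto
  then show ?thesis using closed assms(4) by blast
qed

lemma generator_closed_imp_Dset_closed:
  assumes "numerical_semigroup S"
    and closed: "\<forall>x\<in>M. \<forall>g\<in>minimal_generators S. m + g \<le> x \<longrightarrow> x - g \<in> M"
    and "x \<in> M"
  shows "Dset S x \<inter> {m..} \<subseteq> M"
  using assms(3)
proof (induction x rule: less_induct)
  case (less x)
  show ?case
  proof
    fix \<alpha> assume "\<alpha> \<in> Dset S x \<inter> {m..}"
    then have \<alpha>: "\<alpha> \<in> S" "\<alpha> \<le> x" "x - \<alpha> \<in> S" "m \<le> \<alpha>" unfolding Dset_def by auto
    show "\<alpha> \<in> M"
    proof (cases "\<alpha> = x")
      case True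
      then show ?thesis using less.prems by simp
    next
      case False
      then obtain g where g: "g \<in> minimal_generators S" "g \<le> x - \<alpha>" "x - \<alpha> - g \<in> S"
        using numerical_semigroup_minimal_generator_le[OF assms(1) \<alpha>(3)] \<alpha>(2) by auto
      have "g \<noteq> 0" using g(1) unfolding minimal_generators_def by simp
      have "x - g \<in> M" using closed less.prems g(1,2) \<alpha>(2,4) by auto
      moreover have "\<alpha> \<in> Dset S (x - g) \<inter> {m..}"
        unfolding Dset_def using \<alpha> g(2,3) by (simp add: add.commute)
      ultimately show ?thesis using less.IH[of "x - g"] \<open>g \<noteq> 0\<close> g(2) \<alpha>(2) False by auto
    qed
  qed
qed

theorem proposition3p9:
  fixes S M :: "nat set" and m r :: nat
  assumes "numerical_semigroup S"
    and "finite M" and "M \<noteq> {}" and "card M = r" and "M \<subseteq> S" and "Min M = m"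
    and "2 * int (conductor S) - 1 \<le> int m"
  shows "amenable S m r M \<longleftrightarrow>
    (\<forall>x\<in>M. \<forall>g\<in>minimal_generators S. int x - int g \<ge> int m \<longrightarrow> x - g \<in> M)"
proof -
  have "conductor S \<le> m" using assms(7) by linarith
  have int_le: "int x - int g \<ge> int m \<longleftrightarrow> m + g \<le> x" for x g by linarith
  have "amenable S m r M \<longleftrightarrow> (\<forall>x\<in>M. Dset S x \<inter> {m..} \<subseteq> M)"
    using assms(2-7) by (simp add: amenable_def)
  also have "\<dots> \<longleftrightarrow> (\<forall>x\<in>M. \<forall>g\<in>minimal_generators S. m + g \<le> x \<longrightarrow> x - g \<in> M)"
  proof
    assume "\<forall>x\<in>M. Dset S x \<inter> {m..} \<subseteq> M"
    then show "\<forall>x\<in>M. \<forall>g\<in>minimal_generators S. m + g \<le> x \<longrightarrow> x - g \<in> M"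
      using Dset_closed_imp_diff_closed[OF assms(1) \<open>conductor S \<le> m\<close>]
      by (simp add: minimal_generators_def)
  next
    assume "\<forall>x\<in>M. \<forall>g\<in>minimal_generators S. m + g \<le> x \<longrightarrow> x - g \<in> M"
    then show "\<forall>x\<in>M. Dset S x \<inter> {m..} \<subseteq> M"
      using generator_closed_imp_Dset_closed[OF assms(1)] by blast
  qed
  finally show ?thesis by (simp only: int_le)
qed

end
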